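(* Let $G$ be a context-free grammar, $k\ge 0$, and let $N$ be its canonical LR($k$) NFA. Let $v_1=(\hat\Pi_1,\lambda_1)$ and $v_2=(\hat\Pi_2,\lambda_2)$ be vertices of $N$ that are both reachable from the starting vertex on the same string $\zeta\in(\Lambda\cup\Sigma)^*$ and that have conflicting actions on some lookahead $\mu\in\Gamma^k$. Then for every $\lambda_1'\in\mathcal U(\hat\Pi_1)$ with $\lambda_1'\equiv_{\hat\Pi_1}\lambda_1$ and every $\lambda_2'\in\mathcal U(\hat\Pi_2)$ with $\lambda_2'\equiv_{\hat\Pi_2}\lambda_2$, the vertices $(\hat\Pi_1,\lambda_1')$ and $(\hat\Pi_2,\lambda_2')$ have conflicting actions on $\mu$.
   Context: $G$ has finite nonterminal set $\Lambda$, terminal set $\Sigma$, $\Gamma=\Sigma\cup\{\dashv\}$ with $\dashv$ an end marker, and start symbol $S$ which appears on the left of exactly one production $S\to\eta$ and on no right-hand side. For $T\subseteq(\Lambda\cup\Gamma)^*$, $\mathrm{Gen}(T)$ is the set of $y\in\Gamma^*$ with $x\Rightarrow^*y$ for some $x\in T$, and $\mathrm{First}_k(T)=\{x_1\cdots x_{\min(k,r)}: x_1\cdots x_r\in T\}$; concatenations involving sets are taken elementwise. A dotted production is $X\to\alpha\cdot\beta$ where $X\to\alpha\beta$ is a production. Forward-reachable $k$-follow strings: the least assignment of subsets of $\Gamma^k$ to productions such that $\dashv^k$ is assigned to $S\to\eta$, and whenever $\lambda$ is assigned to $X\to\alpha Y\beta$ then every $\mu\in\mathrm{First}_k(\mathrm{Gen}(\beta\lambda))$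 is assigned to every production $Y\to\gamma$. For a dotted production $\hat\Pi$ with underlying production $\Pi$, $\mathcal U(\hat\Pi)$ is the set assigned to $\Pi$. Canonical LR($k$) NFA: vertices $(\hat\Pi,\lambda)$ with $\lambda\in\mathcal U(\hat\Pi)$; starting vertex $(S\to\cdot\,\eta,\dashv^k)$; $\varepsilon$-edges from $(X\to\alpha\cdot Y\beta,\lambda)$ to $(Y\to\cdot\,\gamma,\mu)$ whenever $\mu\in\mathrm{First}_k(\mathrm{Gen}(\beta\lambda))$; edges labeled $\tau\in\Lambda\cup\Sigma$ from $(X\to\alpha\cdot\tau\beta,\lambda)$ to $(X\to\alpha\tau\cdot\beta,\lambda)$. Actions: vertex $(X\to\alpha\,\cdot,\lambda)$ has action ``Reduce $X\to\alpha$'' on lookahead $\lambda$; vertex $(X\to\alpha\cdot\sigma\beta,\lambda)$ with $\sigma\in\Sigma$ has action ``Shift'' on each lookahead $\mu\in\mathrm{First}_k(\mathrm{Gen}(\sigma\beta\lambda))$; there are no other actions. Two vertices have conflicting actions on $\mu$ if they have distinct actions on $\mu$. A vertex is reachable on a string $\zeta\in(\Lambda\cup\Sigma)^*$ if there is a path of edges from the starting vertex whose labels, with $\varepsilon$'s deleted, concatenate to $\zeta$. The LR($0$) NFA is the case $k=0$ (vertices are effectively the dotted productions). A lookahead $\mu\in\Gamma^k$ is $\hat\Pi$-compatible with $\lambda\in\Gamma^k$, for $\hat\Pi=X\to\alpha\cdot\beta$, if $\mu\in\mathrm{First}_k(\mathrm{Gen}(\beta\lambda))$. A lookahead $\mu$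 is potentially-conflicting for $\hat\Pi$ if there exist a dotted production $\hat\Pi'$ and $\lambda\in\mathcal U(\hat\Pi)$, $\lambda'\in\mathcal U(\hat\Pi')$ such that the LR($0$) NFA vertices for $\hat\Pi$ and $\hat\Pi'$ are reachable on a common string $\zeta\in(\Sigma\cup\Lambda)^*$ in the LR($0$) NFA, and $(\hat\Pi,\lambda)$, $(\hat\Pi',\lambda')$ have conflicting actions on $\mu$ in the canonical LR($k$) NFA. For $\lambda,\lambda'\in\Gamma^k$, $\lambda\equiv_{\hat\Pi}\lambda'$ iff for every potentially-conflicting lookahead $\mu$ for $\hat\Pi$, $\mu$ is $\hat\Pi$-compatible with $\lambda$ iff it is $\hat\Pi$-compatible with $\lambda'$. *)

theory Defs
  imports Main
begin

(* Symbols of Lambda \<union> Gamma, where Gamma = Sigma \<union> {end marker} *)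
datatype ('n, 't) sym = NT 'n | Tm 't | EndM

type_synonym ('n, 't) prod = "'n \<times> ('n, 't) sym list"
(* dotted production X \<rightarrow> \<alpha> . \<beta> represented as (X, \<alpha>, \<beta>) *)
type_synonym ('n, 't) dprod = "'n \<times> ('n, 't) sym list \<times> ('n, 't) sym list"
type_synonym ('n, 't) vertex = "('n, 't) dprod \<times> ('n, 't) sym list"

datatype ('n, 't) action = Shift | Reduce 'n "('n, 't) sym list"

definition is_gamma :: "('n, 't) sym \<Rightarrow> bool" where
  "is_gamma s \<longleftrightarrow> (\<forall>X. s \<noteq> NT X)"

definition cfg :: "('n::finite, 't) prod set \<Rightarrow> 'n \<Rightarrow> bool" where
  "cfg P S \<longleftrightarrow> finite P \<and> (\<exists>!\<eta>. (S, \<eta>) \<in> P) \<and> (\<forall>(X, r) \<in> P. NT S \<notin> set r)"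

inductive step :: "('n, 't) prod set \<Rightarrow> ('n, 't) sym list \<Rightarrow> ('n, 't) sym list \<Rightarrow> bool"
  for P where
  "(X, r) \<in> P \<Longrightarrow> step P (u @ [NT X] @ v) (u @ r @ v)"

definition Gen :: "('n, 't) prod set \<Rightarrow> ('n, 't) sym list set \<Rightarrow> ('n, 't) sym list set" where
  "Gen P T = {y. (\<forall>s \<in> set y. is_gamma s) \<and> (\<exists>x \<in> T. (step P)\<^sup>*\<^sup>* x y)}"

definition First :: "nat \<Rightarrow> 'a list set \<Rightarrow> 'a list set" where
  "First k T = take k ` T"

inductive follow :: "('n, 't) prod set \<Rightarrow> 'n \<Rightarrow> nat \<Rightarrow> ('n, 't) prod \<Rightarrow> ('n, 't) sym list \<Rightarrow> bool"
  for P S k where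
  base: "(S, \<eta>) \<in> P \<Longrightarrow> follow P S k (S, \<eta>) (replicate k EndM)"
| propag: "follow P S k (X, \<alpha> @ [NT Y] @ \<beta>) la \<Longrightarrow> (Y, \<gamma>) \<in> P
          \<Longrightarrow> \<mu> \<in> First k (Gen P {\<beta> @ la}) \<Longrightarrow> follow P S k (Y, \<gamma>) \<mu>"

definition dotted :: "('n, 't) prod set \<Rightarrow> ('n, 't) dprod \<Rightarrow> bool" where
  "dotted P d \<longleftrightarrow> (case d of (X, \<alpha>, \<beta>) \<Rightarrow> (X, \<alpha> @ \<beta>) \<in> P)"

definition U :: "('n, 't) prod set \<Rightarrow> 'n \<Rightarrow> nat \<Rightarrow> ('n, 't) dprod \<Rightarrow> ('n, 't) sym list set" where
  "U P S k d = (case d of (X, \<alpha>, \<beta>) \<Rightarrow> {la. follow P S k (X, \<alpha> @ \<beta>) la})"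

definition is_vertex :: "('n, 't) prod set \<Rightarrow> 'n \<Rightarrow> nat \<Rightarrow> ('n, 't) vertex \<Rightarrow> bool" where
  "is_vertex P S k v \<longleftrightarrow> dotted P (fst v) \<and> snd v \<in> U P S k (fst v)"

definition eps_edge :: "('n, 't) prod set \<Rightarrow> 'n \<Rightarrow> nat \<Rightarrow> ('n, 't) vertex \<Rightarrow> ('n, 't) vertex \<Rightarrow> bool" where
  "eps_edge P S k v w \<longleftrightarrow> is_vertex P S k v \<and>
     (\<exists>X \<alpha> Y \<beta> la \<gamma> \<mu>. v = ((X, \<alpha>, NT Y # \<beta>), la) \<and> w = ((Y, [], \<gamma>), \<mu>) \<and>
        (Y, \<gamma>) \<in> P \<and> \<mu> \<in> First k (Gen P {\<beta> @ la}))"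

definition sym_edge :: "('n, 't) prod set \<Rightarrow> 'n \<Rightarrow> nat \<Rightarrow> ('n, 't) vertex \<Rightarrow> ('n, 't) sym \<Rightarrow> ('n, 't) vertex \<Rightarrow> bool" where
  "sym_edge P S k v \<tau> w \<longleftrightarrow> is_vertex P S k v \<and> \<tau> \<noteq> EndM \<and>
     (\<exists>X \<alpha> \<beta> la. v = ((X, \<alpha>, \<tau> # \<beta>), la) \<and> w = ((X, \<alpha> @ [\<tau>], \<beta>), la))"

inductive reach :: "('n, 't) prod set \<Rightarrow> 'n \<Rightarrow> nat \<Rightarrow> ('n, 't) sym list \<Rightarrow> ('n, 't) vertex \<Rightarrow> bool"
  for P S k where
  start: "(S, \<eta>) \<in> P \<Longrightarrow> reach P S k [] ((S, [], \<eta>), replicate k EndM)"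
| eps: "reach P S k \<zeta> v \<Longrightarrow> eps_edge P S k v w \<Longrightarrow> reach P S k \<zeta> w"
| sym: "reach P S k \<zeta> v \<Longrightarrow> sym_edge P S k v \<tau> w \<Longrightarrow> reach P S k (\<zeta> @ [\<tau>]) w"

inductive has_action :: "('n, 't) prod set \<Rightarrow> nat \<Rightarrow> ('n, 't) vertex \<Rightarrow> ('n, 't) action \<Rightarrow> ('n, 't) sym list \<Rightarrow> bool"
  for P k where
  reduce: "has_action P k ((X, \<alpha>, []), la) (Reduce X \<alpha>) la"
| shift: "\<mu> \<in> First k (Gen P {Tm \<sigma> # \<beta> @ la}) \<Longrightarrow> has_action P k ((X, \<alpha>, Tm \<sigma> # \<beta>), la) Shift \<mu>"

definition conflicting :: "('n, 't) prod set \<Rightarrow> nat \<Rightarrow> ('n, 't) vertex \<Rightarrow> ('n, 't) vertex \<Rightarrow> ('n, 't) sym list \<Rightarrow> bool" where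
  "conflicting P k v1 v2 \<mu> \<longleftrightarrow> (\<exists>a1 a2. a1 \<noteq> a2 \<and> has_action P k v1 a1 \<mu> \<and> has_action P k v2 a2 \<mu>)"

definition compatible :: "('n, 't) prod set \<Rightarrow> nat \<Rightarrow> ('n, 't) dprod \<Rightarrow> ('n, 't) sym list \<Rightarrow> ('n, 't) sym list \<Rightarrow> bool" where
  "compatible P k d \<mu> la \<longleftrightarrow> (case d of (X, \<alpha>, \<beta>) \<Rightarrow> \<mu> \<in> First k (Gen P {\<beta> @ la}))"

definition pot_conflicting :: "('n, 't) prod set \<Rightarrow> 'n \<Rightarrow> nat \<Rightarrow> ('n, 't) dprod \<Rightarrow> ('n, 't) sym list \<Rightarrow> bool" where
  "pot_conflicting P S k d \<mu> \<longleftrightarrow> (\<exists>d' la la' \<zeta>. dotted P d' \<and> la \<in> U P S k d \<and> la' \<in> U P S k d' \<and>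
      reach P S 0 \<zeta> (d, []) \<and> reach P S 0 \<zeta> (d', []) \<and> conflicting P k (d, la) (d', la') \<mu>)"

definition la_equiv :: "('n, 't) prod set \<Rightarrow> 'n \<Rightarrow> nat \<Rightarrow> ('n, 't) dprod \<Rightarrow> ('n, 't) sym list \<Rightarrow> ('n, 't) sym list \<Rightarrow> bool" where
  "la_equiv P S k d la la' \<longleftrightarrow> (\<forall>\<mu>. pot_conflicting P S k d \<mu> \<longrightarrow>
      (compatible P k d \<mu> la \<longleftrightarrow> compatible P k d \<mu> la'))"

end

theory Submission
  imports Defs
begin

(*
  The actions of a vertex (\<Pi>, \<lambda>) on a lookahead \<mu> depend on \<lambda> only through whether \<mu> is
  \<Pi>-compatible with \<lambda>: a reduce action fires on \<mu> iff \<mu> = \<lambda>, which for an empty suffix is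
  exactly compatibility, and a shift action fires on \<mu> iff \<mu> is compatible with \<lambda>. If two
  vertices reachable on a common string conflict on \<mu>, projecting both paths to the LR(0) NFA
  shows that \<mu> is potentially-conflicting for both dotted productions, so replacing each
  lookahead by an equivalent one keeps both actions on \<mu>, and hence the conflict.
*)

lemma append_eq_NT_terminal_suffix:
  assumes "u @ v = w1 @ NT X # w2" "\<forall>s\<in>set v. is_gamma s"
  shows "\<exists>w. u = w1 @ NT X # w \<and> w2 = w @ v"
  using assms
  by (auto simp: append_eq_append_conv2 append_eq_Cons_conv is_gamma_def)

lemma derivation_keeps_terminal_suffix:
  assumes "(step P)\<^sup>*\<^sup>* (u @ v) y" "\<forall>s\<in>set v. is_gamma s"
  shows "\<exists>u'. y = u' @ v \<and> (step P)\<^sup>*\<^sup>* u u'"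
  using assms(1)
proof (induction rule: rtranclp_induct)
  case base
  then show ?case by auto
next
  case (step y z)
  then obtain u' where u': "y = u' @ v" "(step P)\<^sup>*\<^sup>* u u'" by auto
  from step.hyps(2) obtain X r w1 w2 where
    rule: "(X, r) \<in> P" and y: "y = w1 @ NT X # w2" and z: "z = w1 @ r @ w2"
    by (auto elim: Defs.step.cases)
  obtain w where w: "u' = w1 @ NT X # w" "w2 = w @ v"
    using append_eq_NT_terminal_suffix[OF _ assms(2)] u'(1) y by metis
  have "step P u' (w1 @ r @ w)"
    using Defs.step.intros[OF rule, of w1 w] w(1) by simp
  with u'(2) w(2) z show ?case
    by (metis append.assoc rtranclp.rtrancl_into_rtrancl)
qed

lemma derivation_from_Nil: "(step P)\<^sup>*\<^sup>* [] y \<Longrightarrow> y = []"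
  by (induction rule: rtranclp_induct) (auto elim: Defs.step.cases)

lemma Gen_terminal_singleton:
  assumes "\<forall>s\<in>set v. is_gamma s"
  shows "Gen P {v} = {v}"
proof -
  have "y = v" if "(step P)\<^sup>*\<^sup>* v y" for y
    using derivation_keeps_terminal_suffix[of P "[]" v y] that assms derivation_from_Nil
    by fastforce
  then show ?thesis
    using assms by (auto simp: Gen_def)
qed

lemma Gen_append_terminal_suffix:
  assumes "y \<in> Gen P {u @ v}" "\<forall>s\<in>set v. is_gamma s"
  shows "\<exists>u'. y = u' @ v \<and> u' \<in> Gen P {u}"
proof -
  from assms(1) have y: "\<forall>s\<in>set y. is_gamma s" "(step P)\<^sup>*\<^sup>* (u @ v) y"
    by (auto simp: Gen_def)
  then obtain u' where "y = u' @ v" "(step P)\<^sup>*\<^sup>* u u'"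
    using derivation_keeps_terminal_suffix[OF _ assms(2)] by blast
  with y show ?thesis
    by (auto simp: Gen_def)
qed

lemma Gen_nonempty_drop_terminal_suffix:
  "Gen P {u @ v} \<noteq> {} \<Longrightarrow> \<forall>s\<in>set v. is_gamma s \<Longrightarrow> Gen P {u} \<noteq> {}"
  using Gen_append_terminal_suffix by blast

lemma First_0: "First 0 T = (if T = {} then {} else {[]})"
  by (auto simp: First_def)

lemma follow_length_terminal:
  "follow P S k p la \<Longrightarrow> length la = k \<and> (\<forall>s\<in>set la. is_gamma s)"
proof (induction rule: follow.induct)
  case (base \<eta>)
  then show ?case by (auto simp: is_gamma_def)
next
  case (propag X \<alpha> Y \<beta> la \<gamma> \<mu>)
  then obtain y where y: "y \<in> Gen P {\<beta> @ la}" and \<mu>: "\<mu> = take k y"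
    by (auto simp: First_def)
  then obtain u' where "y = u' @ la"
    using Gen_append_terminal_suffix propag.IH by blast
  then have "length \<mu> = k"
    using \<mu> propag.IH by simp
  moreover have "\<forall>s\<in>set \<mu>. is_gamma s"
    using y \<mu> by (auto simp: Gen_def dest: in_set_takeD)
  ultimately show ?case ..
qed

lemma follow_LR0: "follow P S k p la \<Longrightarrow> follow P S 0 p []"
proof (induction rule: follow.induct)
  case (base \<eta>)
  then show ?case using follow.base[of S \<eta> P 0] by simp
next
  case (propag X \<alpha> Y \<beta> la \<gamma> \<mu>)
  have "Gen P {\<beta> @ la} \<noteq> {}"
    using propag.hyps(3) by (auto simp: First_def)
  then have "Gen P {\<beta>} \<noteq> {}"
    using Gen_nonempty_drop_terminal_suffix follow_length_terminal[OF propag.hyps(1)] by blast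
  then show ?case
    using follow.propag[OF propag.IH propag.hyps(2)] by (simp add: First_0)
qed

lemma is_vertex_LR0: "is_vertex P S k (d, la) \<Longrightarrow> is_vertex P S 0 (d, [])"
  by (cases d) (auto simp: is_vertex_def U_def intro: follow_LR0)

lemma eps_edge_LR0:
  assumes "eps_edge P S k (d, la) (d', la')"
  shows "eps_edge P S 0 (d, []) (d', [])"
proof -
  from assms obtain X \<alpha> Y \<beta> \<gamma> where
    v: "is_vertex P S k (d, la)" and d: "d = (X, \<alpha>, NT Y # \<beta>)" and d': "d' = (Y, [], \<gamma>)"
    and rule: "(Y, \<gamma>) \<in> P" and la': "la' \<in> First k (Gen P {\<beta> @ la})"
    unfolding eps_edge_def by blast
  have "\<forall>s\<in>set la. is_gamma s"
    using v follow_length_terminal[of P S k "(X, \<alpha> @ NT Y # \<beta>)" la]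
    by (simp add: d is_vertex_def U_def)
  moreover have "Gen P {\<beta> @ la} \<noteq> {}"
    using la' by (auto simp: First_def)
  ultimately have "Gen P {\<beta>} \<noteq> {}"
    using Gen_nonempty_drop_terminal_suffix by blast
  then show ?thesis
    using is_vertex_LR0[OF v] d d' rule by (auto simp: eps_edge_def First_0)
qed

lemma sym_edge_LR0: "sym_edge P S k (d, la) \<tau> (d', la') \<Longrightarrow> sym_edge P S 0 (d, []) \<tau> (d', [])"
  using is_vertex_LR0 by (fastforce simp: sym_edge_def)

lemma reach_LR0: "reach P S k \<zeta> (d, la) \<Longrightarrow> reach P S 0 \<zeta> (d, [])"
proof (induction \<zeta> "(d, la)" arbitrary: d la rule: reach.induct)
  case (start \<eta>)
  then show ?case using reach.start[of S \<eta> P 0] by simp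
next
  case (eps \<zeta> v)
  obtain d0 la0 where v: "v = (d0, la0)" by fastforce
  show ?case
    using reach.eps[OF eps.hyps(2)[OF v] eps_edge_LR0] eps.hyps(3) v by simp
next
  case (sym \<zeta> v \<tau>)
  obtain d0 la0 where v: "v = (d0, la0)" by fastforce
  show ?case
    using reach.sym[OF sym.hyps(2)[OF v] sym_edge_LR0] sym.hyps(3) v by simp
qed

lemma conflicting_commute: "conflicting P k v1 v2 \<mu> \<Longrightarrow> conflicting P k v2 v1 \<mu>"
  unfolding conflicting_def by metis

lemma pot_conflicting_if_reachable_conflict:
  assumes "is_vertex P S k (d1, la1)" "is_vertex P S k (d2, la2)"
    and "reach P S k \<zeta> (d1, la1)" "reach P S k \<zeta> (d2, la2)"
    and "conflicting P k (d1, la1) (d2, la2) \<mu>"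
  shows "pot_conflicting P S k d1 \<mu>"
proof -
  have "dotted P d2" "la1 \<in> U P S k d1" "la2 \<in> U P S k d2"
    using assms(1,2) by (simp_all add: is_vertex_def)
  then show ?thesis
    unfolding pot_conflicting_def
    using reach_LR0[OF assms(3)] reach_LR0[OF assms(4)] assms(5)
    by (intro exI[of _ d2] exI[of _ la1] exI[of _ la2] exI[of _ \<zeta>] conjI) assumption+
qed

lemma has_action_la_equiv:
  assumes act: "has_action P k (d, la) a \<mu>"
    and pc: "pot_conflicting P S k d \<mu>"
    and v: "is_vertex P S k (d, la)" and la': "la' \<in> U P S k d"
    and eq: "la_equiv P S k d la' la"
  shows "has_action P k (d, la') a \<mu>"
proof -
  obtain X \<alpha> \<beta> where d: "d = (X, \<alpha>, \<beta>)" by (cases d)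
  have la: "la \<in> U P S k d"
    using v by (simp add: is_vertex_def)
  have First_Gen: "First k (Gen P {l}) = {l}" if "l \<in> U P S k d" for l
    using that follow_length_terminal[of P S k "(X, \<alpha> @ \<beta>)" l]
    by (simp add: d U_def Gen_terminal_singleton First_def)
  have compat: "compatible P k d \<mu> la' \<longleftrightarrow> compatible P k d \<mu> la"
    using eq pc by (simp add: la_equiv_def)
  from act show ?thesis
  proof cases
    case reduce
    then have "\<beta> = []" "\<mu> = la" using d by auto
    then have "\<mu> = la'"
      using compat First_Gen[OF la] First_Gen[OF la'] by (simp add: d compatible_def)
    with reduce show ?thesis by (simp add: has_action.reduce)
  next
    case shift
    with d compat show ?thesis
      by (auto simp: compatible_def intro: has_action.shift)
  qed
qed

theorem mainTheorem12:
  fixes P :: "('n::finite, 't) prod set" and S :: 'n and k :: nat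
    and d1 d2 :: "('n, 't) dprod" and la1 la2 la1' la2' \<mu> \<zeta> :: "('n, 't) sym list"
  assumes "cfg P S"
    and "is_vertex P S k (d1, la1)" and "is_vertex P S k (d2, la2)"
    and "reach P S k \<zeta> (d1, la1)" and "reach P S k \<zeta> (d2, la2)"
    and "length \<mu> = k" and "\<forall>s \<in> set \<mu>. is_gamma s"
    and "conflicting P k (d1, la1) (d2, la2) \<mu>"
    and "la1' \<in> U P S k d1" and "la_equiv P S k d1 la1' la1"
    and "la2' \<in> U P S k d2" and "la_equiv P S k d2 la2' la2"
  shows "conflicting P k (d1, la1') (d2, la2') \<mu>"
proof -
  from assms(8) obtain a1 a2 where
    "a1 \<noteq> a2" and act1: "has_action P k (d1, la1) a1 \<mu>" and act2: "has_action P k (d2, la2) a2 \<mu>"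
    by (auto simp: conflicting_def)
  have "pot_conflicting P S k d1 \<mu>" "pot_conflicting P S k d2 \<mu>"
    using pot_conflicting_if_reachable_conflict[OF assms(2-5,8)]
      pot_conflicting_if_reachable_conflict[OF assms(3,2,5,4) conflicting_commute[OF assms(8)]] .
  then have "has_action P k (d1, la1') a1 \<mu>" "has_action P k (d2, la2') a2 \<mu>"
    using has_action_la_equiv[OF act1 _ assms(2,9,10)] has_action_la_equiv[OF act2 _ assms(3,11,12)]
    by blast+
  with \<open>a1 \<noteq> a2\<close> show ?thesis
    unfolding conflicting_def by blast
qed

end
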